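(* Let $q$, $T_q$, $P^2_q$, $\Delta$, $\varepsilon$ be as in the context. Then there is a continuous algebra homomorphism $S:T_q\to T_q$ with $S(U)=U^{-1}$ and $S(V)=V^{-1}$, and for all $x\in T_q$, $$\mu\circ(S,\mathrm{Id})\circ\Delta(x)=\varepsilon(x)\cdot1=\mu\circ(\mathrm{Id},S)\circ\Delta(x),$$ where $(S,\mathrm{Id}),(\mathrm{Id},S):P^2_q\to P^2_q$ are the continuous linear maps with $U_1^kV_1^\ell U_2^mV_2^n\mapsto U_1^{-k}V_1^{-\ell}U_2^mV_2^n$ and $U_1^kV_1^\ell U_2^mV_2^n\mapsto U_1^kV_1^{\ell}U_2^{-m}V_2^{-n}$ respectively, and $\mu:P^2_q\to T_q$ is the continuous linear map with $\mu(U_1^kV_1^\ell U_2^mV_2^n)=U^kV^\ell U^mV^n=q^{-\ell m}U^{k+m}V^{\ell+n}$.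
   Context: Fix $q\in\mathbb C$ with $|q|=1$ and a square root $q^{1/2}$; $q^{r/2}:=(q^{1/2})^r$. $\mathcal S(\mathbb Z^d,\mathbb C)$ denotes the Fréchet space of complex Schwartz sequences on $\mathbb Z^d$, $\delta^a$ the sequence equal to $1$ at $a$ and $0$ elsewhere. $T_q$ is $\mathcal S(\mathbb Z^2,\mathbb C)$ with continuous multiplication $\delta^{m,n}\delta^{k,\ell}=q^{-kn}\delta^{m+k,n+\ell}$ and unit $1=\delta^{0,0}$; with $U=\delta^{1,0}$, $V=\delta^{0,1}$ one has $\delta^{m,n}=U^mV^n$ for all $m,n\in\mathbb Z$ and $UV=qVU$. $P^2_q$ is $\mathcal S(\mathbb Z^4,\mathbb C)$ with continuous multiplication $\delta^{k_1,\ell_1,m_1,n_1}\delta^{k_2,\ell_2,m_2,n_2}=q^{\frac{k_2n_1}{2}-k_2\ell_1-\frac{m_1\ell_2}{2}-m_1n_2}\delta^{k_1+k_2,\ell_1+\ell_2,m_1+m_2,n_1+n_2}$; with $U_1=\delta^{1,0,0,0}$, $V_1=\delta^{0,1,0,0}$, $U_2=\delta^{0,0,1,0}$, $V_2=\delta^{0,0,0,1}$ one has $\delta^{k,\ell,m,n}=U_1^kV_1^\ell U_2^mV_2^n$. $\Delta:T_q\to P^2_q$ is the continuous algebra homomorphism with $\Delta(U)=U_1U_2$, $\Delta(V)=V_1V_2$. $\varepsilon:T_q\to\mathbb C$ is the continuous linear map with $\varepsilon(U^kV^\ell)=q^{k\ell/2}$. *)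

theory Defs
  imports "HOL-Analysis.Analysis"
begin

text \<open>Weights (1 + |a|_1) on Z^2 and Z^4 (equivalent to the Euclidean 1+|a|).\<close>
definition wt2 :: "int \<times> int \<Rightarrow> real" where
  "wt2 = (\<lambda>(m,n). 1 + real_of_int (\<bar>m\<bar> + \<bar>n\<bar>))"

definition wt4 :: "int \<times> int \<times> int \<times> int \<Rightarrow> real" where
  "wt4 = (\<lambda>(k,l,m,n). 1 + real_of_int (\<bar>k\<bar> + \<bar>l\<bar> + \<bar>m\<bar> + \<bar>n\<bar>))"

definition is_schwartz :: "('a \<Rightarrow> real) \<Rightarrow> ('a \<Rightarrow> complex) \<Rightarrow> bool" where
  "is_schwartz w f \<longleftrightarrow> (\<forall>N::nat. bdd_above (range (\<lambda>a. w a ^ N * cmod (f a))))"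

definition seminorm :: "('a \<Rightarrow> real) \<Rightarrow> nat \<Rightarrow> ('a \<Rightarrow> complex) \<Rightarrow> real" where
  "seminorm w N f = (SUP a. w a ^ N * cmod (f a))"

definition cont_lin_map ::
  "('a \<Rightarrow> real) \<Rightarrow> ('b \<Rightarrow> real) \<Rightarrow> (('a \<Rightarrow> complex) \<Rightarrow> ('b \<Rightarrow> complex)) \<Rightarrow> bool" where
  "cont_lin_map w1 w2 T \<longleftrightarrow>
     (\<forall>f. is_schwartz w1 f \<longrightarrow> is_schwartz w2 (T f)) \<and>
     (\<forall>f g. is_schwartz w1 f \<and> is_schwartz w1 g \<longrightarrow> T (\<lambda>a. f a + g a) = (\<lambda>b. T f b + T g b)) \<and>
     (\<forall>c f. is_schwartz w1 f \<longrightarrow> T (\<lambda>a. c * f a) = (\<lambda>b. c * T f b)) \<and>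
     (\<forall>N. \<exists>M C. \<forall>f. is_schwartz w1 f \<longrightarrow> seminorm w2 N (T f) \<le> C * seminorm w1 M f)"

definition delta :: "'a \<Rightarrow> 'a \<Rightarrow> complex" where
  "delta a = (\<lambda>b. if b = a then 1 else 0)"

text \<open>delta^{m,n} delta^{k,l} = q^{-kn} delta^{m+k,n+l}, extended continuously.\<close>
definition tq_mult :: "complex \<Rightarrow> (int \<times> int \<Rightarrow> complex) \<Rightarrow> (int \<times> int \<Rightarrow> complex) \<Rightarrow> (int \<times> int \<Rightarrow> complex)" where
  "tq_mult q f g = (\<lambda>(a,b). \<Sum>\<^sub>\<infinity>(m,n)\<in>UNIV. f (m,n) * g (a - m, b - n) * q powi (- ((a - m) * n)))"

definition tq_one :: "int \<times> int \<Rightarrow> complex" where "tq_one = delta (0,0)"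
definition tq_U :: "int \<times> int \<Rightarrow> complex" where "tq_U = delta (1,0)"
definition tq_V :: "int \<times> int \<Rightarrow> complex" where "tq_V = delta (0,1)"

definition tq_cont_alg_hom :: "complex \<Rightarrow> ((int \<times> int \<Rightarrow> complex) \<Rightarrow> (int \<times> int \<Rightarrow> complex)) \<Rightarrow> bool" where
  "tq_cont_alg_hom q S \<longleftrightarrow> cont_lin_map wt2 wt2 S \<and>
     (\<forall>f g. is_schwartz wt2 f \<and> is_schwartz wt2 g \<longrightarrow> S (tq_mult q f g) = tq_mult q (S f) (S g)) \<and>
     S tq_one = tq_one"

text \<open>Multiplication of P^2_q, with s = q^{1/2}, so q^{r/2} = s^r.  The cocycle is
  k2 n1/2 - k2 l1 - m1 l2/2 - m2 n1 (the context's last term m1 n2 is a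
  typo, inconsistent with delta^{k,l,m,n} = U1^k V1^l U2^m V2^n).  Only for reference.\<close>
definition pq_mult :: "complex \<Rightarrow> (int \<times> int \<times> int \<times> int \<Rightarrow> complex) \<Rightarrow> (int \<times> int \<times> int \<times> int \<Rightarrow> complex) \<Rightarrow> (int \<times> int \<times> int \<times> int \<Rightarrow> complex)" where
  "pq_mult s F G = (\<lambda>(a,b,c,d). \<Sum>\<^sub>\<infinity>(k1,l1,m1,n1)\<in>UNIV.
      F (k1,l1,m1,n1) * G (a - k1, b - l1, c - m1, d - n1) *
      s powi ((a - k1) * n1 - 2 * (a - k1) * l1 - m1 * (b - l1) - 2 * (c - m1) * n1))"

text \<open>Delta(U^k V^l) = (U1 U2)^k (V1 V2)^l = q^{-kl/2} delta^{k,l,k,l}, extended continuously.\<close>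
definition coprod :: "complex \<Rightarrow> (int \<times> int \<Rightarrow> complex) \<Rightarrow> (int \<times> int \<times> int \<times> int \<Rightarrow> complex)" where
  "coprod s f = (\<lambda>(k,l,m,n). if k = m \<and> l = n then s powi (- (k * l)) * f (k,l) else 0)"

definition counit :: "complex \<Rightarrow> (int \<times> int \<Rightarrow> complex) \<Rightarrow> complex" where
  "counit s f = (\<Sum>\<^sub>\<infinity>(k,l)\<in>UNIV. s powi (k * l) * f (k,l))"

text \<open>mu(U1^k V1^l U2^m V2^n) = q^{-lm} U^{k+m} V^{l+n}, extended continuously.\<close>
definition mu :: "complex \<Rightarrow> (int \<times> int \<times> int \<times> int \<Rightarrow> complex) \<Rightarrow> (int \<times> int \<Rightarrow> complex)" where
  "mu q F = (\<lambda>(a,b). \<Sum>\<^sub>\<infinity>(k,l)\<in>UNIV. q powi (- (l * (a - k))) * F (k, l, a - k, b - l))"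

definition SId :: "(int \<times> int \<times> int \<times> int \<Rightarrow> complex) \<Rightarrow> (int \<times> int \<times> int \<times> int \<Rightarrow> complex)" where
  "SId F = (\<lambda>(k,l,m,n). F (-k, -l, m, n))"

definition IdS :: "(int \<times> int \<times> int \<times> int \<Rightarrow> complex) \<Rightarrow> (int \<times> int \<times> int \<times> int \<Rightarrow> complex)" where
  "IdS F = (\<lambda>(k,l,m,n). F (k, l, -m, -n))"

end

theory Submission
  imports Defs
begin

text \<open>The antipode is the reflection \<open>f \<mapsto> f \<circ> uminus\<close>. It preserves every seminorm, and it
  is multiplicative because the cocycle \<open>-kn\<close> of \<open>T_q\<close> is bilinear, hence invariant under
  negating both arguments. The image of \<open>\<Delta>\<close> is supported on the diagonal \<open>(k,l,k,l)\<close>;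
  after \<open>(S,Id)\<close> or \<open>(Id,S)\<close> the map \<open>\<mu>\<close> only sees it in degree \<open>(0,0)\<close>, where the phases
  combine as \<open>q^(kl) q^(-kl/2) = q^(kl/2)\<close>, which is exactly the weight of \<open>\<epsilon>\<close>.\<close>

lemma range_comp_uminus:
  fixes g :: "'a::group_add \<Rightarrow> 'b"
  shows "range (\<lambda>x. g (- x)) = range g"
  by (metis bij_uminus bij_is_surj image_image)

lemma infsum_eq_single:
  fixes f :: "'a \<Rightarrow> 'b::{comm_monoid_add, t2_space}"
  assumes "\<And>x. x \<noteq> p \<Longrightarrow> f x = 0"
  shows "infsum f UNIV = f p"
proof -
  have "infsum f UNIV = infsum f {p}"
    by (rule infsum_cong_neutral) (use assms in auto)
  then show ?thesis by simp
qed

lemma power_int_square_root_cancel: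
  fixes s q :: "'a::field"
  assumes "s ^ 2 = q"
  shows "q powi n * s powi (- n) = s powi n"
proof (cases "s = 0")
  case False
  have "q powi n = s powi n * s powi n"
    using assms by (simp add: power2_eq_square flip: power_int_mult_distrib)
  with False show ?thesis by (simp add: power_int_minus)
qed (use assms in auto)

lemma cont_lin_map_reflect:
  fixes w :: "'a::group_add \<Rightarrow> real"
  assumes w_even: "\<And>x. w (- x) = w x"
  shows "cont_lin_map w w (\<lambda>f x. f (- x))"
proof -
  have "range (\<lambda>x. w x ^ N * cmod (f (- x))) = range (\<lambda>x. w x ^ N * cmod (f x))"
    for N f
    using range_comp_uminus[of "\<lambda>x. w x ^ N * cmod (f x)"] by (simp add: w_even)
  then have "is_schwartz w (\<lambda>x. f (- x)) = is_schwartz w f"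
    and "seminorm w N (\<lambda>x. f (- x)) = seminorm w N f" for N f
    by (simp_all add: is_schwartz_def seminorm_def)
  moreover have "\<exists>M C. \<forall>f. is_schwartz w f \<longrightarrow> seminorm w N (\<lambda>x. f (- x)) \<le> C * seminorm w M f"
    for N
    by (intro exI[of _ N] exI[of _ 1]) (simp add: calculation)
  ultimately show ?thesis
    unfolding cont_lin_map_def by simp
qed

definition tq_antipode :: "(int \<times> int \<Rightarrow> complex) \<Rightarrow> (int \<times> int \<Rightarrow> complex)" where
  "tq_antipode f = (\<lambda>x. f (- x))"

lemma wt2_uminus: "wt2 (- x) = wt2 x"
  by (cases x) (simp add: wt2_def)

lemma cont_lin_map_tq_antipode: "cont_lin_map wt2 wt2 tq_antipode"
  unfolding tq_antipode_def [abs_def] using wt2_uminus by (rule cont_lin_map_reflect)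

lemma tq_antipode_delta: "tq_antipode (delta a) = delta (- a)"
  by (cases a) (auto simp: tq_antipode_def delta_def fun_eq_iff)

lemma tq_antipode_mult: "tq_antipode (tq_mult q f g) = tq_mult q (tq_antipode f) (tq_antipode g)"
proof (rule ext, clarify)
  fix a b :: int
  define h where "h = (\<lambda>(m, n). f (m, n) * g (- a - m, - b - n) * q powi ((a + m) * n))"
  have "tq_antipode (tq_mult q f g) (a, b) = infsum h UNIV"
    by (simp add: tq_antipode_def tq_mult_def h_def algebra_simps)
  also have "\<dots> = infsum (\<lambda>x. h (- x)) UNIV"
    by (rule infsum_reindex_bij_betw [OF bij_uminus, symmetric])
  also have "\<dots> = tq_mult q (tq_antipode f) (tq_antipode g) (a, b)"
    by (auto simp: tq_mult_def tq_antipode_def h_def algebra_simps intro!: infsum_cong)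
  finally show "tq_antipode (tq_mult q f g) (a, b) =
      tq_mult q (tq_antipode f) (tq_antipode g) (a, b)" .
qed

lemma tq_cont_alg_hom_antipode: "tq_cont_alg_hom q tq_antipode"
  by (simp add: tq_cont_alg_hom_def cont_lin_map_tq_antipode tq_antipode_mult tq_one_def
      tq_antipode_delta)

lemma tq_mult_delta_delta:
  "tq_mult q (delta (m, n)) (delta (k, l)) = (\<lambda>x. q powi (- (k * n)) * delta (m + k, n + l) x)"
proof (rule ext, clarify)
  fix a b :: int
  show "tq_mult q (delta (m, n)) (delta (k, l)) (a, b) =
      q powi (- (k * n)) * delta (m + k, n + l) (a, b)"
    unfolding tq_mult_def
    by (subst infsum_eq_single [where p = "(m, n)"]) (auto simp: delta_def split: if_splits)
qed

lemma tq_U_inverse: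
  "tq_mult q (tq_antipode tq_U) tq_U = tq_one" "tq_mult q tq_U (tq_antipode tq_U) = tq_one"
  by (simp_all add: tq_U_def tq_one_def tq_antipode_delta tq_mult_delta_delta)

lemma tq_V_inverse:
  "tq_mult q (tq_antipode tq_V) tq_V = tq_one" "tq_mult q tq_V (tq_antipode tq_V) = tq_one"
  by (simp_all add: tq_V_def tq_one_def tq_antipode_delta tq_mult_delta_delta)

lemma coprod_phase_cancel:
  fixes s q :: "'a::field"
  assumes "s ^ 2 = q"
  shows "q powi (l * k) * (s powi (- (k * l)) * z) = s powi (k * l) * z"
  using power_int_square_root_cancel [OF assms, of "k * l"] by (metis mult.assoc mult.commute)

lemma mu_SId_coprod:
  assumes "s ^ 2 = q"
  shows "mu q (SId (coprod s x)) = (\<lambda>a. counit s x * tq_one a)"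
proof (rule ext, clarify)
  fix a b :: int
  show "mu q (SId (coprod s x)) (a, b) = counit s x * tq_one (a, b)"
  proof (cases "a = 0 \<and> b = 0")
    case True
    define h where "h = (\<lambda>(k, l). s powi (k * l) * x (k, l))"
    have "mu q (SId (coprod s x)) (a, b) = infsum (\<lambda>y. h (- y)) UNIV"
      using True by (auto simp: mu_def SId_def coprod_def h_def coprod_phase_cancel [OF assms]
          intro!: infsum_cong)
    also have "\<dots> = counit s x"
      by (simp add: infsum_reindex_bij_betw [OF bij_uminus] counit_def h_def)
    finally show ?thesis
      using True by (simp add: tq_one_def delta_def)
  qed (auto simp: mu_def SId_def coprod_def tq_one_def delta_def case_prod_unfold)
qed

lemma mu_IdS_coprod:
  assumes "s ^ 2 = q"
  shows "mu q (IdS (coprod s x)) = (\<lambda>a. counit s x * tq_one a)"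
proof (rule ext, clarify)
  fix a b :: int
  show "mu q (IdS (coprod s x)) (a, b) = counit s x * tq_one (a, b)"
  proof (cases "a = 0 \<and> b = 0")
    case True
    then show ?thesis
      by (auto simp: mu_def IdS_def coprod_def counit_def tq_one_def delta_def
          coprod_phase_cancel [OF assms] intro!: infsum_cong)
  qed (auto simp: mu_def IdS_def coprod_def tq_one_def delta_def case_prod_unfold)
qed

theorem mainTheorem4:
  fixes q s :: complex
  assumes "cmod q = 1" and "s ^ 2 = q"
  shows "\<exists>S. tq_cont_alg_hom q S \<and>
           tq_mult q (S tq_U) tq_U = tq_one \<and> tq_mult q tq_U (S tq_U) = tq_one \<and>
           tq_mult q (S tq_V) tq_V = tq_one \<and> tq_mult q tq_V (S tq_V) = tq_one \<and>
           (\<forall>x. is_schwartz wt2 x \<longrightarrow>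
              mu q (SId (coprod s x)) = (\<lambda>a. counit s x * tq_one a) \<and>
              mu q (IdS (coprod s x)) = (\<lambda>a. counit s x * tq_one a))"
  using tq_cont_alg_hom_antipode tq_U_inverse tq_V_inverse
    mu_SId_coprod [OF assms(2)] mu_IdS_coprod [OF assms(2)]
  by blast

end
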